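(* Let $\{W_n\}_{n\ge0}$ be a monic polynomial sequence and write, for $n\ge0$, $$W_{3n}(x)=P_n(x^3)+xa^1_{n-1}(x^3)+x^2a^2_{n-1}(x^3),$$ $$W_{3n+1}(x)=b^1_n(x^3)+xQ_n(x^3)+x^2b^2_{n-1}(x^3),$$ $$W_{3n+2}(x)=c^1_n(x^3)+xc^2_n(x^3)+x^2R_n(x^3),$$ with the component polynomials as described in the context. Then $\{W_n\}$ is an Appell sequence (i.e. $W_n'(x)=nW_{n-1}(x)$ for $n\ge1$) if and only if, for all $n\ge0$: $(I+3xD)Q_n=(3n+1)P_n$, $(2I+3xD)b^2_{n-1}=(3n+1)a^1_{n-1}$, $3Db^1_n=(3n+1)a^2_{n-1}$, $(I+3xD)c^2_n=(3n+2)b^1_n$, $(2I+3xD)R_n=(3n+2)Q_n$, $3Dc^1_n=(3n+2)b^2_{n-1}$, $(I+3xD)a^1_n=(3n+3)c^1_n$, $(2I+3xD)a^2_n=(3n+3)c^2_n$, $3DP_{n+1}=(3n+3)R_n$.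
   Context: $\mathcal{P}$ is the space of complex polynomials; $I$ is the identity, $D$ the derivative, $x$ multiplication by $x$. A monic polynomial sequence (MPS) is a sequence $\{W_n\}_{n\ge0}$ with $W_n$ monic of degree $n$. Cubic decomposition (CD): for any MPS $\{W_n\}$ there are unique polynomials such that the three displayed identities hold, where $\{P_n\},\{Q_n\},\{R_n\}$ are MPSs (principal components) and the secondary components satisfy $\deg a^1_{n-1}\le n-1$, $\deg a^2_{n-1}\le n-1$, $\deg b^1_n\le n$, $\deg b^2_{n-1}\le n-1$, $\deg c^1_n\le n$, $\deg c^2_n\le n$, with $a^1_{-1}=a^2_{-1}=b^2_{-1}=0$. An MPS $\{W_n\}$ is Appell if $DW_{n+1}=(n+1)W_n$ for all $n\ge0$. *)

theory Defs
  imports "HOL-Computational_Algebra.Polynomial"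
begin

definition MPS :: "(nat \<Rightarrow> complex poly) \<Rightarrow> bool" where
  "MPS W \<longleftrightarrow> (\<forall>n. degree (W n) = n \<and> lead_coeff (W n) = 1)"

definition appell :: "(nat \<Rightarrow> complex poly) \<Rightarrow> bool" where
  "appell W \<longleftrightarrow> (\<forall>n. pderiv (W (Suc n)) = smult (of_nat (Suc n)) (W n))"

definition cub :: "complex poly \<Rightarrow> complex poly" where
  "cub p = pcompose p (monom 1 3)"

definition X :: "complex poly" where "X = [:0, 1:]"

definition Lop :: "nat \<Rightarrow> complex poly \<Rightarrow> complex poly" where
  "Lop k p = smult (of_nat k) p + smult 3 (X * pderiv p)"

text \<open>Cubic decomposition. Secondary components with index n-1 are stored shifted:
  A1 n = a^1_{n-1}, A2 n = a^2_{n-1}, B2 n = b^2_{n-1} (so A1 0 = A2 0 = B2 0 = 0).\<close>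
definition cubic_decomp ::
  "(nat \<Rightarrow> complex poly) \<Rightarrow> (nat \<Rightarrow> complex poly) \<Rightarrow> (nat \<Rightarrow> complex poly) \<Rightarrow>
   (nat \<Rightarrow> complex poly) \<Rightarrow> (nat \<Rightarrow> complex poly) \<Rightarrow> (nat \<Rightarrow> complex poly) \<Rightarrow>
   (nat \<Rightarrow> complex poly) \<Rightarrow> (nat \<Rightarrow> complex poly) \<Rightarrow> (nat \<Rightarrow> complex poly) \<Rightarrow>
   (nat \<Rightarrow> complex poly) \<Rightarrow> bool" where
  "cubic_decomp W P Q R A1 A2 B1 B2 C1 C2 \<longleftrightarrow>
     MPS P \<and> MPS Q \<and> MPS R \<and>
     A1 0 = 0 \<and> A2 0 = 0 \<and> B2 0 = 0 \<and>
     (\<forall>n. degree (A1 n) \<le> n - 1 \<and> degree (A2 n) \<le> n - 1 \<and> degree (B2 n) \<le> n - 1 \<and>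
          degree (B1 n) \<le> n \<and> degree (C1 n) \<le> n \<and> degree (C2 n) \<le> n) \<and>
     (\<forall>n. W (3*n) = cub (P n) + X * cub (A1 n) + X^2 * cub (A2 n) \<and>
          W (3*n+1) = cub (B1 n) + X * cub (Q n) + X^2 * cub (B2 n) \<and>
          W (3*n+2) = cub (C1 n) + X * cub (C2 n) + X^2 * cub (R n))"

end

theory Submission
  imports Defs
begin

text \<open>
  A polynomial is determined by its three cubic components, i.e.\ the map
  (a, b, c) \<mapsto> a(x^3) + x b(x^3) + x^2 c(x^3) is injective, and differentiation acts on
  components by D(a, b, c) = ((I + 3xD) b, (2I + 3xD) c, 3 D a).  Each Appell relation
  W_{m+1}' = (m+1) W_m, for m = 3n, 3n+1, 3n+2, is therefore equivalent to three componentwise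
  identities, which are exactly the nine relations of the theorem.
\<close>

definition cubic_combination :: "complex poly \<Rightarrow> complex poly \<Rightarrow> complex poly \<Rightarrow> complex poly" where
  "cubic_combination a b c = cub a + X * cub b + X^2 * cub c"

lemma X_power_eq_monom: "X ^ n = monom 1 n"
  by (simp add: X_def monom_altdef)

lemma X_mult_eq_pCons: "X * p = pCons 0 p"
  by (simp add: X_def)

lemma cub_pCons: "cub (pCons c p) = [:c:] + X^3 * cub p"
  by (simp add: cub_def pcompose_pCons X_power_eq_monom)

lemma cub_add: "cub (p + q) = cub p + cub q"
  by (simp add: cub_def pcompose_add)

lemma cub_smult: "cub (smult c p) = smult c (cub p)"
  by (simp add: cub_def pcompose_smult)

lemma cub_X_mult: "cub (X * p) = X^3 * cub p"
  by (simp add: X_mult_eq_pCons cub_pCons)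

lemma coeff_cub:
  assumes "i < 3"
  shows "coeff (cub p) (3*k + i) = (if i = 0 then coeff p k else 0)"
  using assms
proof (induction p arbitrary: k)
  case 0
  then show ?case by (simp add: cub_def)
next
  case (pCons c p)
  show ?case
  proof (cases k)
    case 0
    then show ?thesis
      using pCons.prems by (auto simp: cub_pCons X_power_eq_monom coeff_monom_mult coeff_pCons')
  next
    case (Suc k')
    then have "3*k + i = 3 + (3*k' + i)" by simp
    then show ?thesis
      using pCons.IH[of k'] pCons.prems Suc
      by (simp add: cub_pCons X_power_eq_monom coeff_monom_mult coeff_pCons')
  qed
qed

lemma coeff_X_power_mult_cub:
  assumes "i < 3" and "j < 3"
  shows "coeff (X^j * cub p) (3*k + i) = (if i = j then coeff p k else 0)"
proof (cases "j \<le> i")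
  case True
  then have "3*k + i - j = 3*k + (i - j)" by simp
  then show ?thesis
    using True assms coeff_cub[of "i - j" p k] by (simp add: X_power_eq_monom coeff_monom_mult)
next
  case False
  show ?thesis
  proof (cases k)
    case (Suc k')
    then have "3*k + i - j = 3*k' + (3 + i - j)" using False assms by simp
    then show ?thesis
      using False assms coeff_cub[of "3 + i - j" p k'] by (simp add: X_power_eq_monom coeff_monom_mult)
  qed (use False in \<open>simp add: X_power_eq_monom coeff_monom_mult\<close>)
qed

lemma coeff_cubic_combination:
  assumes "i < 3"
  shows "coeff (cubic_combination a b c) (3*k + i) =
    (if i = 0 then coeff a k else if i = 1 then coeff b k else coeff c k)"
  using assms coeff_X_power_mult_cub[of i 0 a k] coeff_X_power_mult_cub[of i 1 b k]
    coeff_X_power_mult_cub[of i 2 c k]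
  by (auto simp: cubic_combination_def)

lemma cubic_combination_eq_iff:
  "cubic_combination a b c = cubic_combination a' b' c' \<longleftrightarrow> a = a' \<and> b = b' \<and> c = c'"
proof
  assume "cubic_combination a b c = cubic_combination a' b' c'"
  then have "coeff a k = coeff a' k \<and> coeff b k = coeff b' k \<and> coeff c k = coeff c' k" for k
    using coeff_cubic_combination[of 0 a b c k] coeff_cubic_combination[of 1 a b c k]
      coeff_cubic_combination[of 2 a b c k] coeff_cubic_combination[of 0 a' b' c' k]
      coeff_cubic_combination[of 1 a' b' c' k] coeff_cubic_combination[of 2 a' b' c' k]
    by simp
  then show "a = a' \<and> b = b' \<and> c = c'"
    by (simp add: poly_eq_iff)
qed simp

lemma smult_cubic_combination:
  "smult k (cubic_combination a b c) = cubic_combination (smult k a) (smult k b) (smult k c)"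
  by (simp add: cubic_combination_def cub_smult smult_add_right)

lemma pderiv_cub: "pderiv (cub p) = smult 3 (X^2 * cub (pderiv p))"
proof -
  have "pderiv (monom (1::complex) 3) = smult 3 (X^2)"
    by (simp add: pderiv_monom X_power_eq_monom smult_monom)
  then show ?thesis
    by (simp add: cub_def pderiv_pcompose mult.commute)
qed

lemma pderiv_cubic_combination:
  "pderiv (cubic_combination a b c) = cubic_combination (Lop 1 b) (Lop 2 c) (smult 3 (pderiv a))"
proof -
  have two: "p * 2 = smult 2 p" for p :: "complex poly"
    by (metis mult_2_right smult_add_left smult_1_left one_add_one)
  have "pderiv X = 1"
    by (simp add: X_def pderiv_pCons)
  then show ?thesis
    unfolding cubic_combination_def Lop_def
    by (simp add: pderiv_add pderiv_mult pderiv_power pderiv_cub cub_add cub_smult cub_X_mult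
        algebra_simps numeral_eq_Suc)
       (simp add: two mult.left_commute)
qed

lemma all_nat_mod3_cases: "(\<forall>m::nat. Pr m) \<longleftrightarrow> (\<forall>n. Pr (3*n) \<and> Pr (3*n+1) \<and> Pr (3*n+2))"
proof
  assume split: "\<forall>n. Pr (3*n) \<and> Pr (3*n+1) \<and> Pr (3*n+2)"
  show "\<forall>m. Pr m"
  proof
    fix m :: nat
    have "m = 3*(m div 3) + m mod 3" by simp
    moreover have "m mod 3 = 0 \<or> m mod 3 = 1 \<or> m mod 3 = 2" by arith
    ultimately show "Pr m" using split by (metis add_0_right)
  qed
qed simp

lemma appell_iff_mod3:
  "appell W \<longleftrightarrow> (\<forall>n.
      pderiv (W (3*n+1)) = smult (of_nat (3*n+1)) (W (3*n)) \<and>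
      pderiv (W (3*n+2)) = smult (of_nat (3*n+2)) (W (3*n+1)) \<and>
      pderiv (W (3*Suc n)) = smult (of_nat (3*n+3)) (W (3*n+2)))"
proof -
  have "Suc (3*n) = 3*n+1" "Suc (3*n+1) = 3*n+2" "Suc (3*n+2) = 3*Suc n" "Suc (3*n+2) = 3*n+3"
    for n :: nat by simp_all
  then show ?thesis
    unfolding appell_def all_nat_mod3_cases[of "\<lambda>m. pderiv (W (Suc m)) = smult (of_nat (Suc m)) (W m)"]
    by (simp only:)
qed

theorem proposition6:
  fixes W P Q R A1 A2 B1 B2 C1 C2 :: "nat \<Rightarrow> complex poly"
  assumes "MPS W"
    and "cubic_decomp W P Q R A1 A2 B1 B2 C1 C2"
  shows "appell W \<longleftrightarrow>
    (\<forall>n. Lop 1 (Q n) = smult (of_nat (3*n+1)) (P n)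
       \<and> Lop 2 (B2 n) = smult (of_nat (3*n+1)) (A1 n)
       \<and> smult 3 (pderiv (B1 n)) = smult (of_nat (3*n+1)) (A2 n)
       \<and> Lop 1 (C2 n) = smult (of_nat (3*n+2)) (B1 n)
       \<and> Lop 2 (R n) = smult (of_nat (3*n+2)) (Q n)
       \<and> smult 3 (pderiv (C1 n)) = smult (of_nat (3*n+2)) (B2 n)
       \<and> Lop 1 (A1 (Suc n)) = smult (of_nat (3*n+3)) (C1 n)
       \<and> Lop 2 (A2 (Suc n)) = smult (of_nat (3*n+3)) (C2 n)
       \<and> smult 3 (pderiv (P (Suc n))) = smult (of_nat (3*n+3)) (R n))"
proof -
  have "W (3*n) = cubic_combination (P n) (A1 n) (A2 n)"
    and "W (3*n+1) = cubic_combination (B1 n) (Q n) (B2 n)"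
    and "W (3*n+2) = cubic_combination (C1 n) (C2 n) (R n)" for n
    using assms(2) unfolding cubic_decomp_def cubic_combination_def by auto
  then show ?thesis
    unfolding appell_iff_mod3
    by (simp only: pderiv_cubic_combination smult_cubic_combination cubic_combination_eq_iff conj_assoc)
qed

end
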